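(* Let $k\geq2$ and let $a_1\leq a_2\leq\dots\leq a_k$ be positive integers with $\gcd(a_1,\dots,a_k)=1$, let $S=\langle a_1,\dots,a_k\rangle$, and let $\alpha$ be an integer with $0\leq\alpha\leq a_1a_2$. Then $$n(S,\alpha)\leq\sum_{\lambda=0}^{\lfloor\alpha/a_1\rfloor}\left(\left\lfloor\frac{\alpha-\lambda a_1}{a_2}\right\rfloor+1\right)^{k-1}.$$
   Context: $S=\langle a_1,\dots,a_k\rangle=\{\lambda_1a_1+\dots+\lambda_ka_k:\lambda_i\in\mathbb{Z}_{\geq0}\}$; $n(S,\alpha)$ is the number of elements $s\in S$ with $s\leq\alpha$. *)

theory Defs
  imports Main
begin

definition gen_semigroup :: "nat \<Rightarrow> (nat \<Rightarrow> nat) \<Rightarrow> nat set" where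
  "gen_semigroup k a = {s. \<exists>l :: nat \<Rightarrow> nat. s = (\<Sum>i=1..k. l i * a i)}"

definition count_le :: "nat set \<Rightarrow> int \<Rightarrow> nat" where
  "count_le S \<alpha> = card {s \<in> S. int s \<le> \<alpha>}"

end

theory Submission
  imports Defs "HOL-Library.FuncSet"
begin

(* Every s <= alpha in S has a representation s = l_1 a_1 + ... + l_k a_k, and since a_2 <= a_i
   for i >= 2, its coefficients satisfy l_1 <= alpha div a_1 and l_i <= (alpha - l_1 a_1) div a_2
   for i >= 2. The right-hand side counts exactly these coefficient vectors, so it bounds
   n(S, alpha). *)

definition repr_box :: "nat \<Rightarrow> (nat \<Rightarrow> nat) \<Rightarrow> nat \<Rightarrow> (nat \<times> (nat \<Rightarrow> nat)) set" where
  "repr_box k a A = (SIGMA t:{0..A div a 1}. {2..k} \<rightarrow>\<^sub>E {0..(A - t * a 1) div a 2})"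

lemma finite_repr_box: "finite (repr_box k a A)"
  unfolding repr_box_def by (auto intro!: finite_PiE)

lemma card_repr_box:
  "card (repr_box k a A) = (\<Sum>t=0..A div a 1. ((A - t * a 1) div a 2 + 1) ^ (k - 1))"
  unfolding repr_box_def by (simp add: card_SigmaI card_PiE finite_PiE)

lemma sum_atLeastAtMost_split_first:
  fixes k :: nat
  assumes "1 \<le> k"
  shows "(\<Sum>i=1..k. g i) = g 1 + (\<Sum>i=2..k. g i)"
  using sum.atLeast_Suc_atMost[OF assms, of g] by (simp add: numeral_2_eq_2)

lemma bounded_coefficients_in_repr_box:
  assumes "1 \<le> k" and "a 1 > 0" and "a 2 > 0" and "\<And>i. i \<in> {2..k} \<Longrightarrow> a 2 \<le> a i"
    and "(\<Sum>i=1..k. l i * a i) \<le> A"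
  shows "(l 1, restrict l {2..k}) \<in> repr_box k a A"
proof -
  have split: "(\<Sum>i=1..k. l i * a i) = l 1 * a 1 + (\<Sum>i=2..k. l i * a i)"
    using sum_atLeastAtMost_split_first[OF assms(1)] .
  have first: "l 1 \<le> A div a 1"
    using assms(2,5) split by (simp add: less_eq_div_iff_mult_less_eq)
  have rest: "l i \<le> (A - l 1 * a 1) div a 2" if i: "i \<in> {2..k}" for i
  proof -
    have "l i * a 2 \<le> l i * a i" using assms(4)[OF i] by simp
    also have "\<dots> \<le> (\<Sum>j=2..k. l j * a j)" using i by (intro member_le_sum) auto
    also have "\<dots> \<le> A - l 1 * a 1" using assms(5) split by simp
    finally show ?thesis using assms(3) by (simp add: less_eq_div_iff_mult_less_eq)
  qed
  show ?thesis unfolding repr_box_def using first rest by auto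
qed

lemma count_le_gen_semigroup_le_card_repr_box:
  assumes "1 \<le> k" and "a 1 > 0" and "a 2 > 0" and "\<And>i. i \<in> {2..k} \<Longrightarrow> a 2 \<le> a i"
  shows "count_le (gen_semigroup k a) (int A) \<le> card (repr_box k a A)"
proof -
  define value_of where "value_of p = fst p * a 1 + (\<Sum>i=2..k. snd p i * a i)"
    for p :: "nat \<times> (nat \<Rightarrow> nat)"
  have "{s \<in> gen_semigroup k a. int s \<le> int A} \<subseteq> value_of ` repr_box k a A"
  proof
    fix s assume "s \<in> {s \<in> gen_semigroup k a. int s \<le> int A}"
    then obtain l where s: "s = (\<Sum>i=1..k. l i * a i)" and "s \<le> A"
      unfolding gen_semigroup_def by auto
    then have "(l 1, restrict l {2..k}) \<in> repr_box k a A"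
      using bounded_coefficients_in_repr_box assms by blast
    moreover have "value_of (l 1, restrict l {2..k}) = s"
      unfolding value_of_def s sum_atLeastAtMost_split_first[OF assms(1)] by simp
    ultimately show "s \<in> value_of ` repr_box k a A" by force
  qed
  then show ?thesis
    unfolding count_le_def using finite_repr_box
    by (meson card_image_le card_mono finite_imageI le_trans)
qed

lemma of_nat_sum_floor_powers:
  fixes A b c m :: nat
  assumes "b > 0"
  shows "int (\<Sum>t=0..A div b. ((A - t * b) div c + 1) ^ m)
    = (\<Sum>t=0..int A div int b. ((int A - t * int b) div int c + 1) ^ m)"
proof -
  have "int (\<Sum>t=0..A div b. ((A - t * b) div c + 1) ^ m)
      = (\<Sum>t=0..A div b. ((int A - int t * int b) div int c + 1) ^ m)"
    unfolding of_nat_sum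
  proof (rule sum.cong)
    fix t assume "t \<in> {0..A div b}"
    then have "t * b \<le> A" using assms by (simp add: less_eq_div_iff_mult_less_eq)
    then show "int (((A - t * b) div c + 1) ^ m) = ((int A - int t * int b) div int c + 1) ^ m"
      by (simp add: zdiv_int of_nat_diff add.commute)
  qed simp
  also have "\<dots> = (\<Sum>t=0..int A div int b. ((int A - t * int b) div int c + 1) ^ m)"
  proof -
    have "{0..int A div int b} = int ` {0..A div b}"
      by (simp add: zdiv_int image_int_atLeastAtMost)
    then show ?thesis by (simp add: sum.reindex)
  qed
  finally show ?thesis .
qed

theorem mainTheorem9:
  fixes k :: nat and a :: "nat \<Rightarrow> nat" and \<alpha> :: int
  assumes "k \<ge> 2"
    and "\<And>i. i \<in> {1..k} \<Longrightarrow> a i > 0"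
    and "\<And>i j. i \<in> {1..k} \<Longrightarrow> j \<in> {1..k} \<Longrightarrow> i \<le> j \<Longrightarrow> a i \<le> a j"
    and "Gcd (a ` {1..k}) = 1"
    and "0 \<le> \<alpha>" and "\<alpha> \<le> int (a 1 * a 2)"
  shows "int (count_le (gen_semigroup k a) \<alpha>)
    \<le> (\<Sum>t=0..\<alpha> div int (a 1). ((\<alpha> - t * int (a 1)) div int (a 2) + 1) ^ (k - 1))"
proof -
  obtain A where A: "\<alpha> = int A" using assms(5) nonneg_int_cases by blast
  have a1: "a 1 > 0" and a2: "a 2 > 0" using assms(1,2) by auto
  have "a 2 \<le> a i" if "i \<in> {2..k}" for i using assms(1,3) that by auto
  then have "count_le (gen_semigroup k a) \<alpha> \<le> card (repr_box k a A)"
    unfolding A using count_le_gen_semigroup_le_card_repr_box assms(1) a1 a2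
    by (metis one_le_numeral order_trans)
  then show ?thesis
    unfolding A card_repr_box of_nat_sum_floor_powers[OF a1, symmetric] by linarith
qed

end
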